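(* Let $f\colon\mathbb{R}^n\to\mathbb{R}$ be continuous and suppose there is $\gamma>0$ such that (i) the set $S_\gamma=\{z\in\mathbb{R}^n : f(z)\le\inf f+\gamma\}$ is compact, and (ii) every $x\in S_\gamma$ with $0\in\partial f(x)$ is a global minimizer of $f$. Let $t\in(0,\infty)$ and let $x\in\mathbb{R}^n$ be a local minimizer of $u(\cdot,t)$. Then $x$ is a local minimizer of $f$, $u(x,t)=f(x)$, $\operatorname{prox}_{tf}(x)=\{x\}$, $u(\cdot,t)$ is differentiable at $x$, and $\nabla u(x,t)=0$.
   Context: $\operatorname{prox}_{tf}(x)=\operatorname{argmin}_{z\in\mathbb{R}^n}\big(f(z)+\frac{1}{2t}\|z-x\|^2\big)$ and $u(x,t)=\inf_{z\in\mathbb{R}^n}\big(f(z)+\frac{1}{2t}\|z-x\|^2\big)$; $\nabla u$ denotes the gradient in $x$. The subdifferential $\partial f(\bar x)$ is the set of all $v\in\mathbb{R}^n$ such that $f(x)\ge f(\bar x)+\langle v,x-\bar x\rangle+o(\|x-\bar x\|)$ as $x\to\bar x$. *)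

theory Defs
  imports "HOL-Analysis.Analysis"
begin

definition moreau :: "('a::euclidean_space \<Rightarrow> real) \<Rightarrow> 'a \<Rightarrow> real \<Rightarrow> real" where
  "moreau f x t = (INF z. f z + (norm (z - x))\<^sup>2 / (2 * t))"

definition prox :: "('a::euclidean_space \<Rightarrow> real) \<Rightarrow> real \<Rightarrow> 'a \<Rightarrow> 'a set" where
  "prox f t x = {z. \<forall>w. f z + (norm (z - x))\<^sup>2 / (2 * t) \<le> f w + (norm (w - x))\<^sup>2 / (2 * t)}"

text \<open>(Frechet) subdifferential: f x \<ge> f xbar + <v, x - xbar> + o(|x - xbar|).\<close>
definition subdiff :: "('a::euclidean_space \<Rightarrow> real) \<Rightarrow> 'a \<Rightarrow> 'a set" where
  "subdiff f xbar = {v. \<forall>e>0. \<forall>\<^sub>F x in at xbar.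
      f x \<ge> f xbar + v \<bullet> (x - xbar) - e * norm (x - xbar)}"

definition local_minimizer :: "('a::euclidean_space \<Rightarrow> real) \<Rightarrow> 'a \<Rightarrow> bool" where
  "local_minimizer g x \<longleftrightarrow> (\<exists>r>0. \<forall>y\<in>ball x r. g x \<le> g y)"

definition global_minimizer :: "('a::euclidean_space \<Rightarrow> real) \<Rightarrow> 'a \<Rightarrow> bool" where
  "global_minimizer g x \<longleftrightarrow> (\<forall>y. g x \<le> g y)"

end

theory Submission
  imports Defs
begin

text \<open>
  A proximal point \<open>z \<noteq> x\<close> would make \<open>u(\<cdot>,t)\<close>
  strictly smaller at every point \<open>x + s (z - x)\<close>, \<open>0 < s \<le> 1\<close>, since
  \<open>u(x + s (z - x), t) \<le> f z + (1 - s)\<^sup>2 |z - x|\<^sup>2 / 2t < u(x, t)\<close>; so at a local minimizer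
  \<open>x\<close> of \<open>u(\<cdot>,t)\<close> the (nonempty) proximal set is \<open>{x}\<close> and \<open>u(x,t) = f x\<close>.
  Then \<open>u(x,t) \<le> u(y,t) \<le> f y\<close> near \<open>x\<close>, and \<open>0 \<le> u(y,t) - u(x,t) \<le> |y - x|\<^sup>2 / 2t\<close>
  gives the zero derivative.
\<close>

lemma continuous_attains_global_min:
  fixes g :: "'a::heine_borel \<Rightarrow> real"
  assumes cont: "continuous_on UNIV g" and bnd: "bounded {z. g z \<le> g a}"
  obtains z where "\<And>w. g z \<le> g w"
proof -
  let ?S = "{z. g z \<le> g a}"
  have "closed ?S"
    using cont by (intro closed_Collect_le continuous_on_const)
  with bnd have "compact ?S" by (simp add: compact_eq_bounded_closed)
  moreover have "a \<in> ?S" by simp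
  ultimately obtain z where "z \<in> ?S" "\<forall>w\<in>?S. g z \<le> g w"
    using continuous_attains_inf[of ?S g] cont continuous_on_subset by blast
  then have "g z \<le> g w" for w by (cases "g w \<le> g a") auto
  then show thesis using that by blast
qed

lemma has_derivative_zero_if_quadratic_bound:
  fixes g :: "'a::real_normed_vector \<Rightarrow> real"
  assumes C: "C \<ge> 0" and r: "r > 0"
    and bound: "\<And>y. y \<in> ball x r \<Longrightarrow> \<bar>g y - g x\<bar> \<le> C * (norm (y - x))\<^sup>2"
  shows "(g has_derivative (\<lambda>h. 0)) (at x)"
  unfolding has_derivative_at_alt
proof (intro conjI allI impI)
  fix e :: real assume e: "e > 0"
  show "\<exists>d>0. \<forall>y. norm (y - x) < d \<longrightarrow> norm (g y - g x - 0) \<le> e * norm (y - x)"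
  proof (intro exI[of _ "min r (e / (C + 1))"] conjI allI impI)
    show "min r (e / (C + 1)) > 0" using r e C by simp
    fix y assume y: "norm (y - x) < min r (e / (C + 1))"
    then have "y \<in> ball x r" by (simp add: dist_norm norm_minus_commute)
    then have "\<bar>g y - g x\<bar> \<le> C * (norm (y - x) * norm (y - x))"
      using bound by (simp add: power2_eq_square)
    also have "\<dots> \<le> (C + 1) * (norm (y - x) * (e / (C + 1)))"
      using y C by (intro mult_mono mult_left_mono) auto
    also have "\<dots> = e * norm (y - x)" using C by simp
    finally show "norm (g y - g x - 0) \<le> e * norm (y - x)" by simp
  qed
qed simp

lemma moreau_le:
  assumes "bdd_below (range f)" "t > 0"
  shows "moreau f x t \<le> f z + (norm (z - x))\<^sup>2 / (2 * t)"
proof -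
  obtain m where "\<And>z. m \<le> f z" using assms(1) by (auto simp: bdd_below_def)
  then have "bdd_below (range (\<lambda>z. f z + (norm (z - x))\<^sup>2 / (2 * t)))"
    using assms(2) by (intro bdd_belowI2[of _ m]) (smt (verit) divide_nonneg_pos zero_le_power2)
  then show ?thesis unfolding moreau_def by (rule cINF_lower) simp
qed

lemma moreau_le_self:
  assumes "bdd_below (range f)" "t > 0"
  shows "moreau f x t \<le> f x"
  using moreau_le[OF assms, of x x] by simp

lemma moreau_eq_if_prox:
  assumes "z \<in> prox f t x"
  shows "moreau f x t = f z + (norm (z - x))\<^sup>2 / (2 * t)"
proof -
  have "bdd_below (range (\<lambda>w. f w + (norm (w - x))\<^sup>2 / (2 * t)))"
    using assms unfolding prox_def by (intro bdd_belowI2) auto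
  with assms show ?thesis
    unfolding moreau_def prox_def by (intro antisym cINF_lower cINF_greatest) auto
qed

lemma prox_nonempty:
  assumes cont: "continuous_on UNIV f" and bdd: "bdd_below (range f)" and t: "t > 0"
  shows "prox f t x \<noteq> {}"
proof -
  define g where "g z = f z + (norm (z - x))\<^sup>2 / (2 * t)" for z
  obtain m where m: "\<And>z. m \<le> f z" using bdd by (auto simp: bdd_below_def)
  have "continuous_on UNIV g"
    unfolding g_def by (intro continuous_intros cont) (use t in auto)
  moreover have "bounded {z. g z \<le> g x}"
  proof (rule bounded_subset[OF bounded_cball])
    show "{z. g z \<le> g x} \<subseteq> cball x (sqrt (2 * t * (g x - m)))"
    proof
      fix z assume "z \<in> {z. g z \<le> g x}"
      then have "(norm (z - x))\<^sup>2 / (2 * t) \<le> g x - m"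
        using m[of z] unfolding g_def by simp
      then have "(norm (z - x))\<^sup>2 \<le> 2 * t * (g x - m)"
        using t by (simp add: field_simps)
      then have "norm (z - x) \<le> sqrt (2 * t * (g x - m))" by (rule real_le_rsqrt)
      then show "z \<in> cball x (sqrt (2 * t * (g x - m)))"
        by (simp add: dist_norm norm_minus_commute)
    qed
  qed
  ultimately obtain z where "\<And>w. g z \<le> g w" by (rule continuous_attains_global_min) blast
  then have "z \<in> prox f t x" unfolding prox_def g_def by simp
  then show ?thesis by blast
qed

lemma moreau_less_towards_prox:
  assumes bdd: "bdd_below (range f)" and t: "t > 0"
    and z: "z \<in> prox f t x" "z \<noteq> x" and s: "0 < s" "s \<le> 1"
  shows "moreau f (x + s *\<^sub>R (z - x)) t < moreau f x t"
proof -
  let ?d = "norm (z - x)"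
  have "z - (x + s *\<^sub>R (z - x)) = (1 - s) *\<^sub>R (z - x)" by (simp add: algebra_simps)
  then have "moreau f (x + s *\<^sub>R (z - x)) t \<le> f z + ((1 - s) * ?d)\<^sup>2 / (2 * t)"
    using moreau_le[OF bdd t, of "x + s *\<^sub>R (z - x)" z] s by simp
  also have "\<dots> < f z + ?d\<^sup>2 / (2 * t)"
    using s t z(2) by (intro add_strict_left_mono divide_strict_right_mono power_strict_mono) auto
  also have "\<dots> = moreau f x t" using moreau_eq_if_prox[OF z(1)] by simp
  finally show ?thesis .
qed

lemma prox_subset_if_local_minimizer:
  assumes bdd: "bdd_below (range f)" and t: "t > 0"
    and locmin: "local_minimizer (\<lambda>y. moreau f y t) x"
  shows "prox f t x \<subseteq> {x}"
proof
  fix z assume z: "z \<in> prox f t x"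
  obtain r where r: "r > 0" "\<And>y. y \<in> ball x r \<Longrightarrow> moreau f x t \<le> moreau f y t"
    using locmin unfolding local_minimizer_def by blast
  show "z \<in> {x}"
  proof (rule ccontr)
    assume "z \<notin> {x}"
    then have ne: "z \<noteq> x" by simp
    define s where "s = min 1 (r / (2 * norm (z - x)))"
    have s: "0 < s" "s \<le> 1" using r ne unfolding s_def by auto
    have "s * norm (z - x) \<le> r / 2"
      using ne unfolding s_def by (simp add: min_def field_simps)
    then have "x + s *\<^sub>R (z - x) \<in> ball x r"
      using r s by (simp add: dist_norm)
    with r(2) moreau_less_towards_prox[OF bdd t z ne s] show False by fastforce
  qed
qed

theorem lemma4:
  fixes f :: "'a::euclidean_space \<Rightarrow> real" and \<gamma> t :: real and x :: 'a
  assumes cont: "continuous_on UNIV f"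
    and bdd: "bdd_below (range f)"
    and gam: "\<gamma> > 0"
    and cpt: "compact {z. f z \<le> Inf (range f) + \<gamma>}"
    and crit: "\<And>y. f y \<le> Inf (range f) + \<gamma> \<Longrightarrow> 0 \<in> subdiff f y \<Longrightarrow> global_minimizer f y"
    and tpos: "t > 0"
    and locmin: "local_minimizer (\<lambda>y. moreau f y t) x"
  shows "local_minimizer f x \<and> moreau f x t = f x \<and> prox f t x = {x}
         \<and> (\<lambda>y. moreau f y t) differentiable (at x)
         \<and> ((\<lambda>y. moreau f y t) has_derivative (\<lambda>h. 0)) (at x)"
proof -
  have prox: "prox f t x = {x}"
    using prox_subset_if_local_minimizer[OF bdd tpos locmin] prox_nonempty[OF cont bdd tpos]
    by blast
  then have ux: "moreau f x t = f x" using moreau_eq_if_prox[of x f t x] by simp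
  obtain r where r: "r > 0" "\<And>y. y \<in> ball x r \<Longrightarrow> moreau f x t \<le> moreau f y t"
    using locmin unfolding local_minimizer_def by blast
  have "local_minimizer f x"
    unfolding local_minimizer_def using r ux moreau_le_self[OF bdd tpos] by (metis order_trans)
  moreover have "\<bar>moreau f y t - moreau f x t\<bar> \<le> 1 / (2 * t) * (norm (y - x))\<^sup>2"
    if "y \<in> ball x r" for y
    using r(2)[OF that] moreau_le[OF bdd tpos, of y x] ux by (simp add: norm_minus_commute)
  then have "((\<lambda>y. moreau f y t) has_derivative (\<lambda>h. 0)) (at x)"
    using tpos r(1) by (intro has_derivative_zero_if_quadratic_bound[where C = "1 / (2 * t)" and r = r]) auto
  ultimately show ?thesis using prox ux differentiableI by blast
qed

end
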